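(* Let $(V,\mathcal H,\iota,W)$ be an abelian generalized functional theory with set of weights $\Omega$. Then the set of representable densities $\iota^*(\mathcal P)=\iota^*(\mathcal E)=\mathrm{conv}(\Omega)$ is a convex polytope of dimension $\dim V-\dim\iota^{-1}(\mathrm{span}\{\mathbb 1\})$.
   Context: A generalized functional theory is a tuple $(V,\mathcal H,\iota,W)$ with $V$ a finite-dimensional real vector space, $\mathcal H$ a finite-dimensional complex Hilbert space, $\iota:V\to i\mathfrak u(\mathcal H)$ linear into the Hermitian operators, $W$ Hermitian. States are regarded as elements of $(i\mathfrak u(\mathcal H))^*$ via the trace pairing; $\iota^*$ is the dual map; $\mathcal P$ = pure states, $\mathcal E$ = density operators; $\mathbb 1$ is the identity on $\mathcal H$. The theory is abelian if $[\iota(v),\iota(v')]=0$ for all $v,v'$. A weight is $\alpha\in V^*$ such that some nonzero $\psi$ satisfies $\iota(v)\psi=\langle\alpha,v\rangle\psi$ for all $v$; $\Omega$ denotes the (finite) set of weights. *)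

theory Defs
  imports "HOL-Analysis.Analysis"
begin

text \<open>The Hilbert space H is modelled as complex^'m (finite nonempty index type 'm),
operators as complex^'m^'m, V as real^'n.  Elements of V^* are represented by
vectors of real^'n via the pairing  <alpha, v> = alpha \<bullet> v.\<close>

definition adjoint_mat :: "complex^'m^'m \<Rightarrow> complex^'m^'m" where
  "adjoint_mat A = (\<chi> i j. cnj (A $ j $ i))"

definition hermitian :: "complex^'m^'m \<Rightarrow> bool" where
  "hermitian A \<longleftrightarrow> adjoint_mat A = A"

definition cinner :: "complex^'m \<Rightarrow> complex^'m \<Rightarrow> complex" where
  "cinner x y = (\<Sum>i\<in>UNIV. cnj (x $ i) * y $ i)"

definition density_ops :: "(complex^'m^'m) set" where
  "density_ops = {\<rho>. hermitian \<rho> \<and> (\<forall>x. 0 \<le> Re (cinner x (\<rho> *v x))) \<and> trace \<rho> = 1}"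

definition pure_states :: "(complex^'m^'m) set" where
  "pure_states = {\<rho>. \<exists>\<psi>::complex^'m. cinner \<psi> \<psi> = 1 \<and>
                     \<rho> = (\<chi> i j. \<psi> $ i * cnj (\<psi> $ j))}"

text \<open>The dual map iota^*: a state rho goes to the functional v \<mapsto> tr(rho iota(v)),
represented by its coordinate vector.\<close>
definition iota_star :: "(real^'n \<Rightarrow> complex^'m^'m) \<Rightarrow> complex^'m^'m \<Rightarrow> real^'n" where
  "iota_star \<iota> \<rho> = (\<chi> k. Re (trace (\<rho> ** \<iota> (axis k 1))))"

definition abelian_theory :: "(real^'n \<Rightarrow> complex^'m^'m) \<Rightarrow> bool" where
  "abelian_theory \<iota> \<longleftrightarrow> (\<forall>v v'. \<iota> v ** \<iota> v' = \<iota> v' ** \<iota> v)"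

definition weights :: "(real^'n \<Rightarrow> complex^'m^'m) \<Rightarrow> (real^'n) set" where
  "weights \<iota> = {\<alpha>. \<exists>\<psi>::complex^'m. \<psi> \<noteq> 0 \<and>
                    (\<forall>v. \<iota> v *v \<psi> = complex_of_real (\<alpha> \<bullet> v) *s \<psi>)}"

end

theory Submission
  imports Defs
begin

text \<open>
  The matrices \<open>\<iota>(v)\<close> are commuting and Hermitian, so they have a common orthonormal
  eigenbasis \<open>b\<^sub>1, \<dots>, b\<^sub>N\<close> with \<open>\<iota>(v) b\<^sub>k = \<langle>\<alpha>\<^sub>k, v\<rangle> b\<^sub>k\<close>; the \<open>\<alpha>\<^sub>k\<close> are exactly the
  weights. (The eigenbasis is built by induction on the dimension of an invariant complex subspace:
  the maximiser of a Rayleigh quotient is an eigenvector, and its eigenspace, resp. orthogonal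
  complement, is again invariant.) In this basis \<open>\<iota>\<^sup>*(\<rho>) = \<Sum>\<^sub>k \<langle>b\<^sub>k, \<rho> b\<^sub>k\<rangle> \<alpha>\<^sub>k\<close>, a convex
  combination of weights for every density operator \<open>\<rho>\<close>; conversely \<open>\<Sum>\<^sub>k q\<^sub>k \<alpha>\<^sub>k\<close> is the image
  of the pure state of \<open>\<psi> = \<Sum>\<^sub>k \<surd>q\<^sub>k b\<^sub>k\<close>. Finally, \<open>\<iota>(v)\<close> is a multiple of the identity iff all
  weights take the same value at \<open>v\<close>, and these \<open>v\<close> form the orthogonal complement of the
  direction space of the affine hull of the weights.
\<close>

lemma smult_of_real: "(of_real r :: complex) *s x = r *\<^sub>R x"
  by (simp add: vec_eq_iff complex_eq_iff)

lemma cinner_zero_right [simp]: "cinner x 0 = 0"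
  by (simp add: cinner_def)

lemma cinner_add_right: "cinner x (y + z) = cinner x y + cinner x z"
  by (simp add: cinner_def distrib_left sum.distrib)

lemma cinner_diff_right: "cinner x (y - z) = cinner x y - cinner x z"
  by (simp add: cinner_def right_diff_distrib sum_subtractf)

lemma cinner_smult_right: "cinner x (c *s y) = c * cinner x y"
  by (simp add: cinner_def sum_distrib_left mult.left_commute)

lemma cinner_smult_left: "cinner (c *s x) y = cnj c * cinner x y"
  by (simp add: cinner_def sum_distrib_left mult.assoc)

lemma cinner_scaleR_left: "cinner (r *\<^sub>R x) y = of_real r * cinner x y"
  by (simp flip: smult_of_real add: cinner_smult_left)

lemma cinner_sum_right: "cinner x (sum f S) = (\<Sum>s\<in>S. cinner x (f s))"
  by (simp add: cinner_def sum_distrib_left sum.swap[of _ S])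

lemma cnj_cinner: "cnj (cinner x y) = cinner y x"
  by (simp add: cinner_def mult.commute)

lemma inner_eq_Re_cinner: "x \<bullet> y = Re (cinner x y)"
  by (simp add: cinner_def inner_vec_def inner_complex_def Re_sum)

lemma cinner_self: "cinner x x = of_real ((norm x)\<^sup>2)"
proof -
  have "Im (cinner x x) = 0"
    by (simp add: cinner_def Im_sum)
  then show ?thesis
    by (simp add: complex_eq_iff flip: inner_eq_Re_cinner dot_square_norm)
qed

lemma hermitian_cinner:
  assumes "hermitian M"
  shows "cinner (M *v x) y = cinner x (M *v y)"
proof -
  have M: "cnj (M $ i $ j) = M $ j $ i" for i j
    using arg_cong[OF assms[unfolded hermitian_def], of "\<lambda>A. A $ j $ i"]
    by (simp add: adjoint_mat_def)
  have "cinner (M *v x) y = (\<Sum>i\<in>UNIV. \<Sum>j\<in>UNIV. M $ j $ i * cnj (x $ j) * y $ i)"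
    by (simp add: cinner_def matrix_vector_mult_def M sum_distrib_right)
  also have "\<dots> = (\<Sum>j\<in>UNIV. cnj (x $ j) * (\<Sum>i\<in>UNIV. M $ j $ i * y $ i))"
    by (subst sum.swap) (simp add: sum_distrib_left mult_ac)
  also have "\<dots> = cinner x (M *v y)"
    by (simp add: cinner_def matrix_vector_mult_def)
  finally show ?thesis .
qed

lemma hermitian_inner: "hermitian M \<Longrightarrow> (M *v x) \<bullet> y = x \<bullet> (M *v y)"
  by (simp add: inner_eq_Re_cinner hermitian_cinner)

lemma scaleR_matrix_vector_mult:
  fixes A :: "'a::real_algebra_1^'n^'m"
  shows "(r *\<^sub>R A) *v x = r *\<^sub>R (A *v x)"
  by (simp add: vec_eq_iff matrix_vector_mult_def scaleR_sum_right)

definition ket_bra :: "complex^'m \<Rightarrow> complex^'m^'m" where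
  "ket_bra \<psi> = (\<chi> i j. \<psi> $ i * cnj (\<psi> $ j))"

lemma pure_states_eq: "pure_states = {ket_bra \<psi> | \<psi>. cinner \<psi> \<psi> = 1}"
  by (auto simp: pure_states_def ket_bra_def)

lemma ket_bra_mult: "ket_bra \<psi> *v x = cinner \<psi> x *s \<psi>"
  by (simp add: ket_bra_def vec_eq_iff matrix_vector_mult_def cinner_def sum_distrib_left mult_ac)

lemma cinner_ket_bra: "cinner x (ket_bra \<psi> *v x) = of_real ((cmod (cinner x \<psi>))\<^sup>2)"
proof -
  have "cinner \<psi> x = cnj (cinner x \<psi>)"
    by (simp add: cnj_cinner)
  then show ?thesis
    using complex_norm_square[of "cinner x \<psi>"]
    by (simp add: ket_bra_mult cinner_smult_right mult.commute)
qed

lemma pure_states_subset_density_ops: "pure_states \<subseteq> density_ops"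
proof
  fix \<rho> :: "complex^'m^'m"
  assume "\<rho> \<in> pure_states"
  then obtain \<psi> where \<psi>: "cinner \<psi> \<psi> = 1" and \<rho>: "\<rho> = ket_bra \<psi>"
    by (auto simp: pure_states_eq)
  have "hermitian \<rho>"
    by (simp add: \<rho> ket_bra_def hermitian_def adjoint_mat_def vec_eq_iff mult.commute)
  moreover have "trace \<rho> = 1"
    using \<psi> by (simp add: \<rho> ket_bra_def trace_def cinner_def mult.commute)
  ultimately show "\<rho> \<in> density_ops"
    by (simp add: density_ops_def \<rho> cinner_ket_bra)
qed

section \<open>Eigenvectors of self-adjoint maps\<close>

lemma linear_coeff_eq_0_if_quadratic_nonneg:
  fixes a c :: real
  assumes "\<And>t. 0 \<le> t * a + t\<^sup>2 * c"
  shows "a = 0"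
proof -
  define d where "d = \<bar>c\<bar> + 1"
  have d: "d > 0"
    by (simp add: d_def add_nonneg_pos)
  define t where "t = - a / d"
  have "0 \<le> t * a + t\<^sup>2 * c"
    by (rule assms)
  also have "\<dots> \<le> t * a + t\<^sup>2 * (d - 1)"
    by (simp add: d_def mult_left_mono)
  also have "\<dots> = - a\<^sup>2 / d\<^sup>2"
    using d by (simp add: t_def field_simps power2_eq_square)
  finally have "a\<^sup>2 / d\<^sup>2 \<le> 0"
    by simp
  then show ?thesis
    using d by (simp add: divide_le_0_iff)
qed

lemma quadratic_form_max_on_unit_sphere:
  fixes f :: "'a::euclidean_space \<Rightarrow> 'a"
  assumes "linear f" "subspace S" "S \<noteq> {0}"
  obtains x where "x \<in> S" "norm x = 1" "\<forall>z\<in>S. z \<bullet> f z \<le> (x \<bullet> f x) * (z \<bullet> z)"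
proof -
  define K where "K = S \<inter> sphere 0 1"
  have "compact K"
    unfolding K_def by (simp add: assms(2) closed_Int_compact closed_subspace)
  obtain y where "y \<in> S" "y \<noteq> 0"
    using assms(2,3) subspace_0 by blast
  then have "(1 / norm y) *\<^sub>R y \<in> K"
    by (simp add: K_def assms(2) subspace_scale)
  then have "K \<noteq> {}"
    by blast
  moreover have "continuous_on K (\<lambda>x. x \<bullet> f x)"
    using assms(1) linear_continuous_on linear_conv_bounded_linear
    by (intro continuous_intros) blast
  ultimately obtain x where x: "x \<in> K" and max: "\<And>z. z \<in> K \<Longrightarrow> z \<bullet> f z \<le> x \<bullet> f x"
    using continuous_attains_sup[OF \<open>compact K\<close>] by blast
  have "z \<bullet> f z \<le> (x \<bullet> f x) * (z \<bullet> z)" if "z \<in> S" for z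
  proof (cases "z = 0")
    case True
    then show ?thesis
      using assms(1) by (simp add: linear_0)
  next
    case False
    then have "(1 / norm z) *\<^sub>R z \<in> K"
      using that by (simp add: K_def assms(2) subspace_scale)
    moreover have "((1 / norm z) *\<^sub>R z) \<bullet> f ((1 / norm z) *\<^sub>R z) = (z \<bullet> f z) / (norm z)\<^sup>2"
      by (simp add: linear_scale[OF assms(1)] power2_eq_square)
    ultimately have "(z \<bullet> f z) / (norm z)\<^sup>2 \<le> x \<bullet> f x"
      using max by metis
    with False show ?thesis
      by (simp add: divide_le_eq dot_square_norm mult.commute)
  qed
  with x show ?thesis
    using that by (auto simp: K_def)
qed

lemma self_adjoint_quadratic_form_maximizer_is_eigenvector:
  fixes f :: "'a::real_inner \<Rightarrow> 'a"
  assumes f: "linear f" "\<And>x y. f x \<bullet> y = x \<bullet> f y" and S: "subspace S" "\<And>z. z \<in> S \<Longrightarrow> f z \<in> S"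
    and x: "x \<in> S" "norm x = 1" and max: "\<And>z. z \<in> S \<Longrightarrow> z \<bullet> f z \<le> (x \<bullet> f x) * (z \<bullet> z)"
  shows "f x = (x \<bullet> f x) *\<^sub>R x"
proof -
  define l where "l = x \<bullet> f x"
  define w where "w = f x - l *\<^sub>R x"
  have xx: "x \<bullet> x = 1"
    using x(2) by (simp add: dot_square_norm)
  have xw: "x \<bullet> w = 0"
    by (simp add: w_def l_def inner_diff_right xx)
  have wfx: "w \<bullet> f x = w \<bullet> w"
  proof -
    have "f x = w + l *\<^sub>R x"
      by (simp add: w_def)
    then show ?thesis
      using xw by (simp add: inner_add_right inner_commute)
  qed
  have "w \<in> S"
    using S x by (simp add: w_def subspace_diff subspace_scale)
  have "0 \<le> t * (- 2 * (w \<bullet> w)) + t\<^sup>2 * (l * (w \<bullet> w) - w \<bullet> f w)" for t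
  proof -
    have "x + t *\<^sub>R w \<in> S"
      using S \<open>w \<in> S\<close> x by (simp add: subspace_add subspace_scale)
    then have "(x + t *\<^sub>R w) \<bullet> f (x + t *\<^sub>R w) \<le> l * ((x + t *\<^sub>R w) \<bullet> (x + t *\<^sub>R w))"
      using max l_def by blast
    moreover have "x \<bullet> f w = w \<bullet> w"
      using f(2)[of w x] wfx by (simp add: inner_commute)
    ultimately show ?thesis
      by (simp add: linear_add[OF f(1)] linear_scale[OF f(1)] inner_add_left inner_add_right
          xx xw wfx inner_commute[of w x] l_def[symmetric] algebra_simps power2_eq_square)
  qed
  then have "- 2 * (w \<bullet> w) = 0"
    by (rule linear_coeff_eq_0_if_quadratic_nonneg)
  then show ?thesis
    by (simp add: w_def l_def)
qed

lemma self_adjoint_has_eigenvector: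
  fixes f :: "'a::euclidean_space \<Rightarrow> 'a"
  assumes "linear f" "\<And>x y. f x \<bullet> y = x \<bullet> f y"
    and "subspace S" "S \<noteq> {0}" "\<And>z. z \<in> S \<Longrightarrow> f z \<in> S"
  obtains x l where "x \<in> S" "x \<noteq> 0" "f x = l *\<^sub>R x"
proof -
  obtain x where "x \<in> S" "norm x = 1" "\<forall>z\<in>S. z \<bullet> f z \<le> (x \<bullet> f x) * (z \<bullet> z)"
    using quadratic_form_max_on_unit_sphere assms(1,3,4) by blast
  moreover from this have "f x = (x \<bullet> f x) *\<^sub>R x"
    using self_adjoint_quadratic_form_maximizer_is_eigenvector assms by blast
  ultimately show ?thesis
    using that by force
qed

section \<open>Joint eigenbases of commuting Hermitian matrices\<close>

text \<open>Complex subspaces are modelled by \<open>vec.subspace\<close> (closure under \<open>*s\<close>); the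
  Rayleigh-quotient argument runs in the underlying real Euclidean space.\<close>

lemma subspace_if_vec_subspace: "vec.subspace S \<Longrightarrow> subspace (S :: (complex^'m) set)"
  by (auto simp: subspace_def vec.subspace_def simp flip: smult_of_real)

lemma vec_subspace_unit_vector:
  assumes "vec.subspace S" "S \<noteq> {0}"
  obtains u where "u \<in> S" "cinner u u = 1"
proof -
  obtain x where x: "x \<in> S" "x \<noteq> 0"
    using assms vec.subspace_0 by blast
  define u where "u = (1 / norm x) *\<^sub>R x"
  have "u \<in> S"
    using assms(1) x(1) by (simp add: u_def vec.subspace_scale flip: smult_of_real)
  moreover have "cinner u u = 1"
    using x(2) by (simp add: u_def cinner_self)
  ultimately show ?thesis
    using that by blast
qed

lemma commuting_hermitian_common_eigenvector:
  fixes G :: "(complex^'m^'m) set"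
  assumes "vec.subspace S" "S \<noteq> {0}"
    and "\<forall>M\<in>G. hermitian M" "\<forall>M\<in>G. \<forall>N\<in>G. M ** N = N ** M" "\<forall>M\<in>G. \<forall>x\<in>S. M *v x \<in> S"
  shows "\<exists>u\<in>S. cinner u u = 1 \<and> (\<forall>M\<in>G. \<exists>l::real. M *v u = l *\<^sub>R u)"
  using assms
proof (induction "vec.dim S" arbitrary: S rule: less_induct)
  case less
  show ?case
  proof (cases "\<forall>M\<in>G. \<exists>l::real. \<forall>x\<in>S. M *v x = l *\<^sub>R x")
    case True
    obtain u where "u \<in> S" "cinner u u = 1"
      using vec_subspace_unit_vector less.prems(1,2) by blast
    with True show ?thesis
      by blast
  next
    case False
    then obtain M where M: "M \<in> G" and not_scalar: "\<forall>l::real. \<exists>x\<in>S. M *v x \<noteq> l *\<^sub>R x"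
      by blast
    obtain x l where x: "x \<in> S" "x \<noteq> 0" "M *v x = l *\<^sub>R x"
      using self_adjoint_has_eigenvector[of "(*v) M" S] less.prems M
      by (auto simp: hermitian_inner subspace_if_vec_subspace)
    define T where "T = S \<inter> {y. M *v y = l *\<^sub>R y}"
    have "vec.subspace {y. M *v y = l *\<^sub>R y}"
      by (auto simp: vec.subspace_def matrix_vector_right_distrib vector_scalar_commute
          simp flip: smult_of_real)
    then have T: "vec.subspace T"
      unfolding T_def using less.prems(1) by (rule vec.subspace_inter[rotated])
    have "T \<noteq> {0}"
      using x by (auto simp: T_def)
    have invariant: "\<forall>N\<in>G. \<forall>y\<in>T. N *v y \<in> T"
    proof (intro ballI)
      fix N y
      assume "N \<in> G" "y \<in> T"
      have "M *v (N *v y) = N *v (M *v y)"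
        using M \<open>N \<in> G\<close> less.prems(4) by (metis matrix_vector_mul_assoc)
      also have "\<dots> = l *\<^sub>R (N *v y)"
        using \<open>y \<in> T\<close> by (simp add: T_def vector_scalar_commute flip: smult_of_real)
      finally show "N *v y \<in> T"
        using \<open>N \<in> G\<close> \<open>y \<in> T\<close> less.prems(5) by (simp add: T_def)
    qed
    have "vec.dim T < vec.dim S"
    proof -
      have "T \<subseteq> S" "T \<noteq> S"
        using not_scalar by (auto simp: T_def)
      then show ?thesis
        using vec.subspace_dim_equal[OF T less.prems(1)] by fastforce
    qed
    from less.hyps[OF this T \<open>T \<noteq> {0}\<close> less.prems(3,4) invariant]
    show ?thesis
      by (auto simp: T_def)
  qed
qed

lemma hermitian_preserves_orthogonal_complement_of_eigenvector:
  assumes "hermitian M" "M *v u = l *\<^sub>R u" "cinner u y = 0"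
  shows "cinner u (M *v y) = 0"
proof -
  have "cinner u (M *v y) = cinner (M *v u) y"
    by (simp add: hermitian_cinner assms(1))
  then show ?thesis
    by (simp add: assms(2,3) cinner_scaleR_left)
qed

lemma commuting_hermitian_joint_eigenbasis:
  fixes G :: "(complex^'m^'m) set"
  assumes "vec.subspace S"
    and "\<forall>M\<in>G. hermitian M" "\<forall>M\<in>G. \<forall>N\<in>G. M ** N = N ** M" "\<forall>M\<in>G. \<forall>x\<in>S. M *v x \<in> S"
  shows "\<exists>B. finite B \<and> B \<subseteq> S \<and> (\<forall>b\<in>B. \<forall>b'\<in>B. cinner b b' = (if b = b' then 1 else 0))
    \<and> (\<forall>b\<in>B. \<forall>M\<in>G. \<exists>l::real. M *v b = l *\<^sub>R b) \<and> (\<forall>x\<in>S. x = (\<Sum>b\<in>B. cinner b x *s b))"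
  using assms
proof (induction "vec.dim S" arbitrary: S rule: less_induct)
  case less
  show ?case
  proof (cases "S = {0}")
    case True
    then show ?thesis
      by (intro exI[of _ "{}"]) auto
  next
    case False
    then obtain u where u: "u \<in> S" "cinner u u = 1" and eigen_u: "\<forall>M\<in>G. \<exists>l::real. M *v u = l *\<^sub>R u"
      using commuting_hermitian_common_eigenvector[OF less.prems(1) False less.prems(2-4)] by blast
    define S' where "S' = S \<inter> {y. cinner u y = 0}"
    have "vec.subspace {y. cinner u y = 0}"
      by (auto simp: vec.subspace_def cinner_add_right cinner_smult_right)
    then have S': "vec.subspace S'"
      unfolding S'_def using less.prems(1) by (rule vec.subspace_inter[rotated])
    have invariant: "\<forall>M\<in>G. \<forall>y\<in>S'. M *v y \<in> S'"
    proof (intro ballI)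
      fix M y
      assume M: "M \<in> G" and y: "y \<in> S'"
      then obtain l :: real where l: "M *v u = l *\<^sub>R u"
        using eigen_u by blast
      have "cinner u (M *v y) = 0"
        using hermitian_preserves_orthogonal_complement_of_eigenvector[of M u l y] M y l less.prems(2)
        by (auto simp: S'_def)
      then show "M *v y \<in> S'"
        using M y less.prems(4) by (simp add: S'_def)
    qed
    have "vec.dim S' < vec.dim S"
    proof -
      have "S' \<subseteq> S" "u \<notin> S'"
        using u by (auto simp: S'_def)
      then show ?thesis
        using vec.subspace_dim_equal[OF S' less.prems(1)] u(1) by fastforce
    qed
    from less.hyps[OF this S' less.prems(2,3) invariant] obtain B' where B': "finite B'" "B' \<subseteq> S'"
      "\<forall>b\<in>B'. \<forall>b'\<in>B'. cinner b b' = (if b = b' then 1 else 0)"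
      "\<forall>b\<in>B'. \<forall>M\<in>G. \<exists>l::real. M *v b = l *\<^sub>R b" "\<forall>x\<in>S'. x = (\<Sum>b\<in>B'. cinner b x *s b)"
      by blast
    have orth_u: "cinner u b = 0" "cinner b u = 0" if "b \<in> B'" for b
      using that B'(2) cnj_cinner[of b u] by (auto simp: S'_def)
    have "u \<notin> B'"
      using orth_u(1)[of u] u(2) by auto
    have expansion: "y = (\<Sum>b\<in>insert u B'. cinner b y *s b)" if "y \<in> S" for y
    proof -
      define y' where "y' = y - cinner u y *s u"
      have "y' \<in> S'"
        using that u less.prems(1)
        by (simp add: S'_def y'_def cinner_diff_right cinner_smult_right vec.subspace_diff vec.subspace_scale)
      then have "y' = (\<Sum>b\<in>B'. cinner b y' *s b)"
        using B'(5) by blast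
      also have "\<dots> = (\<Sum>b\<in>B'. cinner b y *s b)"
        using orth_u by (intro sum.cong) (simp_all add: y'_def cinner_diff_right cinner_smult_right)
      finally show ?thesis
        using B'(1) \<open>u \<notin> B'\<close> by (simp add: y'_def diff_eq_eq add.commute)
    qed
    show ?thesis
    proof (intro exI conjI)
      show "finite (insert u B')"
        using B'(1) by simp
      show "insert u B' \<subseteq> S"
        using B'(2) u(1) by (auto simp: S'_def)
      show "\<forall>b\<in>insert u B'. \<forall>b'\<in>insert u B'. cinner b b' = (if b = b' then 1 else 0)"
        using B'(3) u(2) orth_u by auto
      show "\<forall>b\<in>insert u B'. \<forall>M\<in>G. \<exists>l::real. M *v b = l *\<^sub>R b"
        using B'(4) eigen_u by blast
    qed (use expansion in blast)
  qed
qed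

lemma common_eigenvector_weight:
  fixes \<iota> :: "'a::euclidean_space \<Rightarrow> complex^'m^'m"
  assumes "linear \<iota>" "x \<noteq> 0" "\<forall>v. \<exists>l::real. \<iota> v *v x = l *\<^sub>R x"
  obtains \<alpha> where "\<forall>v. \<iota> v *v x = (\<alpha> \<bullet> v) *\<^sub>R x"
proof -
  define \<phi> where "\<phi> v = (x \<bullet> (\<iota> v *v x)) / (x \<bullet> x)" for v
  have eigen: "\<iota> v *v x = \<phi> v *\<^sub>R x" for v
  proof -
    obtain l :: real where l: "\<iota> v *v x = l *\<^sub>R x"
      using assms(3) by blast
    then have "\<phi> v = l"
      using assms(2) by (simp add: \<phi>_def)
    with l show ?thesis
      by simp
  qed
  have "linear \<phi>"
    by (rule linearI)
      (simp_all add: \<phi>_def linear_add[OF assms(1)] linear_scale[OF assms(1)] inner_add_right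
        matrix_vector_mult_add_rdistrib scaleR_matrix_vector_mult add_divide_distrib)
  \<comment> \<open>Riesz representation of the functional \<open>\<phi>\<close>\<close>
  then have "\<phi> v = adjoint \<phi> 1 \<bullet> v" for v
    by (simp add: adjoint_clauses(2))
  with eigen have "\<forall>v. \<iota> v *v x = (adjoint \<phi> 1 \<bullet> v) *\<^sub>R x"
    by simp
  then show ?thesis
    by (rule that)
qed

section \<open>Convex geometry\<close>

lemma convex_hull_finite_image_coefficients:
  fixes f :: "'i \<Rightarrow> 'a::real_vector"
  assumes "finite I" "y \<in> convex hull (f ` I)"
  obtains q where "\<forall>i\<in>I. 0 \<le> q i" "sum q I = 1" "(\<Sum>i\<in>I. q i *\<^sub>R f i) = y"
proof -
  obtain u where u: "\<forall>x\<in>f ` I. 0 \<le> u x" "sum u (f ` I) = 1" "(\<Sum>x\<in>f ` I. u x *\<^sub>R x) = y"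
    using assms convex_hull_finite[of "f ` I"] by auto
  \<comment> \<open>the weight of each point is split evenly over its fibre\<close>
  define fibre where "fibre x = {i \<in> I. f i = x}" for x
  define q where "q i = u (f i) / card (fibre (f i))" for i
  have sum_fibre: "sum q (fibre x) = u x" if "x \<in> f ` I" for x
  proof -
    have "card (fibre x) > 0"
      using that assms(1) by (auto simp: fibre_def card_gt_0_iff)
    moreover have "sum q (fibre x) = card (fibre x) * (u x / card (fibre x))"
      by (simp add: q_def fibre_def)
    ultimately show ?thesis
      by simp
  qed
  have "\<forall>i\<in>I. 0 \<le> q i"
    using u(1) by (simp add: q_def)
  moreover have "sum q I = 1"
    using u(2) sum_fibre by (simp add: sum.image_gen[OF assms(1), of q f] fibre_def)
  moreover have "(\<Sum>i\<in>I. q i *\<^sub>R f i) = y"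
  proof -
    have "(\<Sum>i\<in>I. q i *\<^sub>R f i) = (\<Sum>x\<in>f ` I. \<Sum>i\<in>fibre x. q i *\<^sub>R x)"
      by (simp add: sum.image_gen[OF assms(1), of _ f] fibre_def)
    also have "\<dots> = (\<Sum>x\<in>f ` I. u x *\<^sub>R x)"
      by (intro sum.cong refl) (simp add: sum_fibre flip: scaleR_sum_left)
    finally show ?thesis
      using u(3) by simp
  qed
  ultimately show ?thesis
    using that by blast
qed

lemma aff_dim_eq_DIM_minus_dim_level_directions:
  fixes A :: "'a::euclidean_space set"
  assumes "A \<noteq> {}"
  shows "aff_dim A = int DIM('a) - int (dim {v. \<exists>c. \<forall>\<alpha>\<in>A. \<alpha> \<bullet> v = c})"
proof -
  obtain \<alpha>\<^sub>0 where \<alpha>\<^sub>0: "\<alpha>\<^sub>0 \<in> A"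
    using assms by blast
  define D where "D = (\<lambda>\<alpha>. \<alpha> - \<alpha>\<^sub>0) ` A"
  have "aff_dim A = int (dim D)"
    unfolding D_def using \<alpha>\<^sub>0 by (intro aff_dim_eq_dim_subtract hull_inc)
  moreover have "{v. \<exists>c. \<forall>\<alpha>\<in>A. \<alpha> \<bullet> v = c} = {v \<in> UNIV. \<forall>x\<in>span D. orthogonal x v}"
  proof -
    have "(\<exists>c. \<forall>\<alpha>\<in>A. \<alpha> \<bullet> v = c) \<longleftrightarrow> (\<forall>x\<in>D. orthogonal x v)" for v
      using \<alpha>\<^sub>0 by (auto simp: D_def orthogonal_def inner_diff_left)
    moreover have "(\<forall>x\<in>D. orthogonal x v) \<longleftrightarrow> (\<forall>x\<in>span D. orthogonal x v)" for v
      using orthogonal_to_span[of _ D v] span_base[of _ D] by (auto simp: orthogonal_commute)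
    ultimately show ?thesis
      by auto
  qed
  moreover have "dim {v \<in> UNIV. \<forall>x\<in>span D. orthogonal x v} + dim (span D) = DIM('a)"
    using dim_subspace_orthogonal_to_vectors[of "span D" UNIV] by (simp add: subspace_span)
  ultimately show ?thesis
    by (simp add: dim_span)
qed

locale joint_eigenbasis =
  fixes \<iota> :: "real^'n \<Rightarrow> complex^'m^'m" and B :: "(complex^'m) set" and a :: "complex^'m \<Rightarrow> real^'n"
  assumes hermitian: "hermitian (\<iota> v)"
    and finite: "finite B"
    and orthonormal: "b \<in> B \<Longrightarrow> b' \<in> B \<Longrightarrow> cinner b b' = (if b = b' then 1 else 0)"
    and expansion: "x = (\<Sum>b\<in>B. cinner b x *s b)"
    and eigen: "b \<in> B \<Longrightarrow> \<iota> v *v b = (a b \<bullet> v) *\<^sub>R b"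

lemma abelian_theory_joint_eigenbasis:
  fixes \<iota> :: "real^'n \<Rightarrow> complex^'m^'m"
  assumes "linear \<iota>" "\<And>v. hermitian (\<iota> v)" "abelian_theory \<iota>"
  obtains B a where "joint_eigenbasis \<iota> B a"
proof -
  obtain B where B: "finite B" "\<forall>b\<in>B. \<forall>b'\<in>B. cinner b b' = (if b = b' then 1 else 0)"
    "\<forall>b\<in>B. \<forall>v. \<exists>l::real. \<iota> v *v b = l *\<^sub>R b" "\<forall>x. x = (\<Sum>b\<in>B. cinner b x *s b)"
    using commuting_hermitian_joint_eigenbasis[of UNIV "range \<iota>"] assms(2,3)
    by (auto simp: abelian_theory_def)
  have "\<exists>\<alpha>. \<forall>v. \<iota> v *v b = (\<alpha> \<bullet> v) *\<^sub>R b" if "b \<in> B" for b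
  proof -
    have "b \<noteq> 0"
      using B(2) that by force
    moreover have "\<forall>v. \<exists>l::real. \<iota> v *v b = l *\<^sub>R b"
      using B(3) that by blast
    ultimately show ?thesis
      using common_eigenvector_weight[OF assms(1)] by blast
  qed
  then obtain a where "\<forall>b\<in>B. \<forall>v. \<iota> v *v b = (a b \<bullet> v) *\<^sub>R b"
    using bchoice[of B "\<lambda>b \<alpha>. \<forall>v. \<iota> v *v b = (\<alpha> \<bullet> v) *\<^sub>R b"] by blast
  then have "joint_eigenbasis \<iota> B a"
    using B assms(2) by unfold_locales blast+
  then show ?thesis
    by (rule that)
qed

context joint_eigenbasis
begin

lemma cinner_expansion: "b \<in> B \<Longrightarrow> cinner b (\<Sum>b'\<in>B. c b' *s b') = c b"
  by (simp add: cinner_sum_right cinner_smult_right orthonormal finite if_distrib cong: if_cong)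

lemma nonzero_coefficient: "\<psi> \<noteq> 0 \<Longrightarrow> \<exists>b\<in>B. cinner b \<psi> \<noteq> 0"
  using expansion[of \<psi>] by (metis (no_types, lifting) sum.neutral vector_smult_lzero)

lemma sum_basis_components: "(\<Sum>b\<in>B. cnj (b $ j) * b $ i) = (if i = j then 1 else 0)"
proof -
  have "cinner b (axis j 1) = cnj (b $ j)" for b
    by (simp add: cinner_def axis_def if_distrib cong: if_cong)
  then have "axis j 1 $ i = (\<Sum>b\<in>B. cnj (b $ j) * b $ i)"
    using arg_cong[OF expansion[of "axis j 1"], of "\<lambda>x. x $ i"] by (simp add: sum_component)
  then show ?thesis
    by (simp add: axis_def)
qed

lemma trace_eq_sum: "trace M = (\<Sum>b\<in>B. cinner b (M *v b))"
proof -
  have "trace M = (\<Sum>i\<in>UNIV. \<Sum>j\<in>UNIV. M $ i $ j * (\<Sum>b\<in>B. cnj (b $ i) * b $ j))"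
    by (simp add: sum_basis_components trace_def if_distrib cong: if_cong)
  also have "\<dots> = (\<Sum>i\<in>UNIV. \<Sum>j\<in>UNIV. \<Sum>b\<in>B. M $ i $ j * (cnj (b $ i) * b $ j))"
    by (simp add: sum_distrib_left)
  also have "\<dots> = (\<Sum>b\<in>B. \<Sum>i\<in>UNIV. \<Sum>j\<in>UNIV. M $ i $ j * (cnj (b $ i) * b $ j))"
    by (subst sum.swap) (intro sum.cong refl sum.swap)
  also have "\<dots> = (\<Sum>b\<in>B. cinner b (M *v b))"
    by (simp add: cinner_def matrix_vector_mult_def sum_distrib_left mult_ac)
  finally show ?thesis .
qed

lemma iota_star_eq_sum: "iota_star \<iota> \<rho> = (\<Sum>b\<in>B. Re (cinner b (\<rho> *v b)) *\<^sub>R a b)"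
proof -
  have "trace (\<rho> ** \<iota> (axis k 1)) = (\<Sum>b\<in>B. of_real (a b $ k) * cinner b (\<rho> *v b))" for k
    by (simp add: trace_eq_sum eigen cart_eq_inner_axis cinner_smult_right vector_scalar_commute
        flip: matrix_vector_mul_assoc smult_of_real cong: sum.cong)
  then show ?thesis
    by (simp add: iota_star_def vec_eq_iff mult.commute)
qed

lemma weights_eq: "weights \<iota> = a ` B"
proof
  show "a ` B \<subseteq> weights \<iota>"
  proof
    fix \<alpha>
    assume "\<alpha> \<in> a ` B"
    then obtain b where b: "b \<in> B" "\<alpha> = a b"
      by blast
    moreover have "b \<noteq> 0"
      using orthonormal[OF b(1) b(1)] by auto
    ultimately show "\<alpha> \<in> weights \<iota>"
      using eigen by (auto simp: weights_def smult_of_real)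
  qed
next
  show "weights \<iota> \<subseteq> a ` B"
  proof
    fix \<alpha>
    assume "\<alpha> \<in> weights \<iota>"
    then obtain \<psi> where "\<psi> \<noteq> 0" and \<psi>: "\<And>v. \<iota> v *v \<psi> = of_real (\<alpha> \<bullet> v) *s \<psi>"
      by (auto simp: weights_def)
    then obtain b where b: "b \<in> B" "cinner b \<psi> \<noteq> 0"
      using nonzero_coefficient by blast
    have "\<alpha> \<bullet> v = a b \<bullet> v" for v
    proof -
      have "of_real (\<alpha> \<bullet> v) * cinner b \<psi> = cinner b (\<iota> v *v \<psi>)"
        by (simp add: \<psi> cinner_smult_right)
      also have "\<dots> = cinner (\<iota> v *v b) \<psi>"
        by (simp add: hermitian_cinner hermitian)
      also have "\<dots> = of_real (a b \<bullet> v) * cinner b \<psi>"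
        by (simp add: eigen b(1) cinner_scaleR_left)
      finally show ?thesis
        using b(2) by simp
    qed
    then have "\<alpha> = a b"
      by (metis inner_diff_left inner_eq_zero_iff right_minus_eq)
    with b(1) show "\<alpha> \<in> a ` B"
      by blast
  qed
qed

lemma basis_nonempty: "B \<noteq> {}"
  using nonzero_coefficient[of "axis undefined 1"] by auto

lemma iota_star_density_ops_subset: "iota_star \<iota> ` density_ops \<subseteq> convex hull (weights \<iota>)"
proof
  fix y
  assume "y \<in> iota_star \<iota> ` density_ops"
  then obtain \<rho> where \<rho>: "\<rho> \<in> density_ops" and y: "y = iota_star \<iota> \<rho>"
    by blast
  have nonneg: "0 \<le> Re (cinner b (\<rho> *v b))" for b
    using \<rho> by (simp add: density_ops_def)
  have "trace \<rho> = 1"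
    using \<rho> by (simp add: density_ops_def)
  then have "(\<Sum>b\<in>B. Re (cinner b (\<rho> *v b))) = 1"
    unfolding trace_eq_sum by (simp flip: Re_sum)
  then show "y \<in> convex hull (weights \<iota>)"
    unfolding y iota_star_eq_sum weights_eq
    by (rule convex_sum[OF finite convex_convex_hull _ nonneg]) (simp add: hull_inc)
qed

lemma convex_hull_subset_iota_star_pure_states: "convex hull (weights \<iota>) \<subseteq> iota_star \<iota> ` pure_states"
proof
  fix y
  assume "y \<in> convex hull (weights \<iota>)"
  then obtain q where q: "\<forall>b\<in>B. 0 \<le> q b" "sum q B = 1" "(\<Sum>b\<in>B. q b *\<^sub>R a b) = y"
    using convex_hull_finite_image_coefficients[OF finite] by (auto simp: weights_eq)
  define \<psi> where "\<psi> = (\<Sum>b\<in>B. of_real (sqrt (q b)) *s b)"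
  have coeff: "cinner b \<psi> = of_real (sqrt (q b))" if "b \<in> B" for b
    using that by (simp add: \<psi>_def cinner_expansion)
  have "cinner \<psi> \<psi> = (\<Sum>b\<in>B. of_real (sqrt (q b)) * cinner \<psi> b)"
    by (subst (2) \<psi>_def) (simp add: cinner_sum_right cinner_smult_right)
  also have "\<dots> = (\<Sum>b\<in>B. of_real (q b))"
  proof (intro sum.cong refl)
    fix b
    assume "b \<in> B"
    then have "cinner \<psi> b = of_real (sqrt (q b))"
      using coeff cnj_cinner[of b \<psi>] by simp
    with q(1) \<open>b \<in> B\<close> show "of_real (sqrt (q b)) * cinner \<psi> b = of_real (q b)"
      by (simp flip: of_real_mult)
  qed
  finally have "cinner \<psi> \<psi> = 1"
    using q(2) by (simp flip: of_real_sum)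
  then have "ket_bra \<psi> \<in> pure_states"
    by (auto simp: pure_states_eq)
  moreover have "Re (cinner b (ket_bra \<psi> *v b)) = q b" if "b \<in> B" for b
    using q(1) that by (simp add: cinner_ket_bra coeff)
  then have "iota_star \<iota> (ket_bra \<psi>) = y"
    using q(3) by (simp add: iota_star_eq_sum)
  ultimately show "y \<in> iota_star \<iota> ` pure_states"
    by blast
qed

lemma scalar_iff_weights_agree: "(\<exists>c. \<iota> v = c *\<^sub>R mat 1) \<longleftrightarrow> (\<exists>c. \<forall>\<alpha>\<in>weights \<iota>. \<alpha> \<bullet> v = c)"
proof
  assume "\<exists>c. \<iota> v = c *\<^sub>R mat 1"
  then obtain c where c: "\<iota> v = c *\<^sub>R mat 1"
    by blast
  have "a b \<bullet> v = c" if "b \<in> B" for b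
  proof -
    have "(a b \<bullet> v) *\<^sub>R b = c *\<^sub>R b"
      unfolding eigen[OF that, symmetric] c by (simp add: scaleR_matrix_vector_mult)
    moreover have "b \<noteq> 0"
      using orthonormal[OF that that] by auto
    ultimately show ?thesis
      by (metis scaleR_cancel_right)
  qed
  then show "\<exists>c. \<forall>\<alpha>\<in>weights \<iota>. \<alpha> \<bullet> v = c"
    by (auto simp: weights_eq)
next
  assume "\<exists>c. \<forall>\<alpha>\<in>weights \<iota>. \<alpha> \<bullet> v = c"
  then obtain c where c: "\<forall>b\<in>B. a b \<bullet> v = c"
    by (auto simp: weights_eq)
  have "\<iota> v *v x = (c *\<^sub>R mat 1) *v x" for x
  proof -
    have "\<iota> v *v x = \<iota> v *v (\<Sum>b\<in>B. cinner b x *s b)"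
      by (rule arg_cong[OF expansion])
    also have "\<dots> = (\<Sum>b\<in>B. cinner b x *s (\<iota> v *v b))"
      by (simp add: vec.sum vector_scalar_commute)
    also have "\<dots> = c *\<^sub>R (\<Sum>b\<in>B. cinner b x *s b)"
      using c by (simp add: eigen vec.scale_sum_right vector_smult_assoc mult.commute flip: smult_of_real)
    also have "\<dots> = (c *\<^sub>R mat 1) *v x"
      by (simp add: scaleR_matrix_vector_mult flip: expansion)
    finally show ?thesis .
  qed
  then have "\<iota> v = c *\<^sub>R mat 1"
    by (simp add: matrix_eq)
  then show "\<exists>c. \<iota> v = c *\<^sub>R mat 1"
    by blast
qed

lemma aff_dim_convex_hull_weights:
  "aff_dim (convex hull (weights \<iota>)) = int CARD('n) - int (dim {v. \<exists>c::real. \<iota> v = c *\<^sub>R mat 1})"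
  using basis_nonempty
  by (simp add: aff_dim_convex_hull aff_dim_eq_DIM_minus_dim_level_directions weights_eq
      scalar_iff_weights_agree)

end

theorem proposition4p7:
  fixes \<iota> :: "real^'n \<Rightarrow> complex^'m^'m"
    and W :: "complex^'m^'m"
  assumes lin: "linear \<iota>"
    and herm: "\<And>v. hermitian (\<iota> v)"
    and W_herm: "hermitian W"
    and ab: "abelian_theory \<iota>"
  shows "iota_star \<iota> ` pure_states = iota_star \<iota> ` density_ops
    \<and> iota_star \<iota> ` density_ops = convex hull (weights \<iota>)
    \<and> polytope (convex hull (weights \<iota>))
    \<and> aff_dim (convex hull (weights \<iota>))
        = int CARD('n) - int (dim {v. \<exists>c::real. \<iota> v = c *\<^sub>R mat 1})"
proof -
  obtain B a where "joint_eigenbasis \<iota> B a"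
    using abelian_theory_joint_eigenbasis[OF lin herm ab] .
  then interpret joint_eigenbasis \<iota> B a .
  have "iota_star \<iota> ` pure_states \<subseteq> iota_star \<iota> ` density_ops"
    by (rule image_mono[OF pure_states_subset_density_ops])
  then show ?thesis
    using iota_star_density_ops_subset convex_hull_subset_iota_star_pure_states
      aff_dim_convex_hull_weights finite
    by (auto simp: polytope_def weights_eq)
qed

end
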